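(* Let $L, N \in \mathbb{R}_{>0}$. Consider the super-twisting differentiator \begin{align*} \dot y_1 &= \lambda_1 \sqrt{L}\, \lfloor u - y_1 \rceil^{1/2} + y_2, & y_1(0) &= u(0),\\ \dot y_2 &= \lambda_2 L\, \lfloor u - y_1 \rceil^{0}, & y_2(0) &= 0,\\ y &= y_2, \end{align*} with parameters $\lambda_1, \lambda_2 \in \mathbb{R}_{>0}$. Then for every $\tau \in \mathbb{R}_{\ge 0}$ there exist $f \in \mathcal{F}_L$ and $\eta \in \mathcal{E}_N$ with $f(0) = \dot f(0) = 0$ such that some (Filippov) trajectory of the differentiator with input $u = f + \eta$ satisfies $$\sup_{t \ge \tau} |y(t) - \dot f(t)| \ge 2\sqrt{\lambda_2+1}\,\sqrt{NL}.$$
   Context: For $z,p \in \mathbb{R}$, $\lfloor z \rceil^{p} = |z|^p \operatorname{sign}(z)$; in particular $\lfloor z \rceil^0 = \operatorname{sign}(z)$. Solutions of the differentiator (which has a discontinuous right-hand side) are understood in the sense of Filippov. $\mathcal{F}_L$ is the set of differentiable functions $f:\mathbb{R}_{\ge 0}\to\mathbb{R}$ with Lipschitz continuous first derivative such that $|\ddot f(t)| \le L$ for almost every $t \ge 0$. $\mathcal{E}_N$ is the set of Lebesgue measurable functions $\eta:\mathbb{R}_{\ge 0}\to\mathbb{R}$ with $|\eta(t)| \le N$ for all $t \ge 0$. *)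

theory Defs
  imports "HOL-Analysis.Analysis"
begin

definition sgnpow :: "real \<Rightarrow> real \<Rightarrow> real" where
  "sgnpow z p = \<bar>z\<bar> powr p * sgn z"

definition in_FL :: "real \<Rightarrow> (real \<Rightarrow> real) \<Rightarrow> (real \<Rightarrow> real) \<Rightarrow> bool" where
  "in_FL L f f' \<longleftrightarrow>
     (\<forall>t\<ge>0. (f has_real_derivative f' t) (at t within {0..})) \<and>
     (\<exists>K. K-lipschitz_on {0..} f') \<and>
     (AE t in lebesgue. t \<ge> 0 \<longrightarrow>
        (\<exists>f''. (f' has_real_derivative f'') (at t within {0..}) \<and> \<bar>f''\<bar> \<le> L))"

definition in_EN :: "real \<Rightarrow> (real \<Rightarrow> real) \<Rightarrow> bool" where
  "in_EN N \<eta> \<longleftrightarrow> \<eta> \<in> borel_measurable (lebesgue_on {0..}) \<and> (\<forall>t\<ge>0. \<bar>\<eta> t\<bar> \<le> N)"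

definition filippov_set :: "('a::euclidean_space \<Rightarrow> 'a) \<Rightarrow> 'a \<Rightarrow> 'a set" where
  "filippov_set g x =
     (\<Inter>\<delta>\<in>{0<..}. \<Inter>M\<in>null_sets lebesgue. closure (convex hull (g ` (ball x \<delta> - M))))"

text \<open>Filippov solution on [0,inf) of x' = g t x: y is absolutely continuous
  on every [0,T] (written as integral of an absolutely integrable v) and
  v t \<in> Filippov set at y t for almost every t \<ge> 0.\<close>
definition filippov_solution ::
  "(real \<Rightarrow> 'a::euclidean_space \<Rightarrow> 'a) \<Rightarrow> (real \<Rightarrow> 'a) \<Rightarrow> bool" where
  "filippov_solution g y \<longleftrightarrow>
     (\<exists>v. (\<forall>T\<ge>0. v absolutely_integrable_on {0..T} \<and> (v has_integral (y T - y 0)) {0..T}) \<and>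
          (AE t in lebesgue. t \<ge> 0 \<longrightarrow> v t \<in> filippov_set (g t) (y t)))"

definition std_rhs :: "real \<Rightarrow> real \<Rightarrow> real \<Rightarrow> (real \<Rightarrow> real) \<Rightarrow> real \<Rightarrow> real \<times> real \<Rightarrow> real \<times> real" where
  "std_rhs l1 l2 L u t z =
     (l1 * sqrt L * sgnpow (u t - fst z) (1/2) + snd z,
      l2 * L * sgnpow (u t - fst z) 0)"

end

theory Submission
  imports Defs
begin

text \<open>
  The differentiator is driven along its sliding surface y1 = u. Take f'' = -L s, where s
  switches between +1, -1, +1 and 0 at times tau < t1 < t2 < t3, and y2 = -l2 f'; then the
  estimation error y2 - f' = -(l2 + 1) f' grows linearly up to (l2 + 1) L h at t1 = tau + h.
  Sliding requires the noise eta = u - f = -N - (l2 + 1) f, which stays in [-N, N] up to t1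
  as long as (l2 + 1) L h^2 <= 4 N; equality gives the error 2 sqrt ((l2 + 1) N L).
  Afterwards eta would leave the band, so on (t1, te] the input is put q0^2 below y1: y2 keeps
  decreasing at rate l2 L while y1 leaves the surface with drift -l1 sqrt L q0. The remaining
  parameters q0, te, t2, t3 are chosen, separately for l1^2 <= 2 (l2 + 1) and
  l1^2 >= 2 (l2 + 1), such that |eta| <= N holds at all times.
\<close>

section \<open>Filippov sets of the super-twisting vector field\<close>

lemma continuous_limit_in_filippov_set:
  fixes g h :: "'a::euclidean_space \<Rightarrow> 'a"
  assumes "isCont h x" "open H" "x \<in> closure H" "\<And>z. z \<in> H \<Longrightarrow> g z = h z"
  shows "h x \<in> filippov_set g x"
  unfolding filippov_set_def
proof (intro INT_I)
  fix \<delta> :: real and M :: "'a set" assume "\<delta> \<in> {0<..}" and "M \<in> null_sets lebesgue"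
  have "h x \<in> closure (g ` (ball x \<delta> - M))"
    unfolding closure_approachable
  proof (intro allI impI)
    fix e :: real assume "e > 0"
    then obtain r where "r > 0" and r: "\<And>z. dist z x < r \<Longrightarrow> dist (h z) (h x) < e"
      using \<open>isCont h x\<close> unfolding continuous_at_eps_delta by blast
    define U where "U = ball x (min r \<delta>) \<inter> H"
    have "min r \<delta> > 0"
      using \<open>r > 0\<close> \<open>\<delta> \<in> {0<..}\<close> by simp
    then obtain z0 where "z0 \<in> H" "dist z0 x < min r \<delta>"
      using \<open>x \<in> closure H\<close> unfolding closure_approachable by blast
    then have "U \<noteq> {}"
      unfolding U_def by (auto simp: dist_commute)
    moreover have "open U"
      unfolding U_def using \<open>open H\<close> by (intro open_Int open_ball)
    \<comment> \<open>A nonempty open set is not negligible, so it is not covered by M.\<close>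
    ultimately have "\<not> negligible U"
      by (rule open_not_negligible[rotated])
    moreover have "negligible M"
      using \<open>M \<in> null_sets lebesgue\<close> by (simp add: negligible_iff_null_sets)
    ultimately have "\<not> U \<subseteq> M"
      using negligible_subset by metis
    then obtain z where z: "z \<in> U" "z \<notin> M"
      by blast
    then have "z \<in> H" "dist z x < r" "z \<in> ball x \<delta> - M"
      unfolding U_def by (auto simp: dist_commute)
    then have "g z \<in> g ` (ball x \<delta> - M)" and "dist (g z) (h x) < e"
      using assms(4)[of z] r[of z] by (blast, simp)
    then show "\<exists>w\<in>g ` (ball x \<delta> - M). dist w (h x) < e" by blast
  qed
  also have "\<dots> \<subseteq> closure (convex hull (g ` (ball x \<delta> - M)))"
    by (intro closure_mono hull_subset)
  finally show "h x \<in> closure (convex hull (g ` (ball x \<delta> - M)))" .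
qed

lemma convex_filippov_set: "convex (filippov_set g x)"
  unfolding filippov_set_def
  by (intro convex_INT ballI convex_closure convex_convex_hull)

lemma sgnpow_pos: "z > 0 \<Longrightarrow> sgnpow z (1/2) = sqrt z" "z > 0 \<Longrightarrow> sgnpow z 0 = 1"
  by (auto simp: sgnpow_def powr_half_sqrt)

lemma sgnpow_neg: "z < 0 \<Longrightarrow> sgnpow z (1/2) = - sqrt (-z)" "z < 0 \<Longrightarrow> sgnpow z 0 = -1"
  by (auto simp: sgnpow_def powr_half_sqrt)

definition sta_field :: "real \<Rightarrow> real \<Rightarrow> real \<Rightarrow> real \<times> real \<Rightarrow> real \<times> real" where
  "sta_field a b w z = (a * sgnpow (w - fst z) (1/2) + snd z, b * sgnpow (w - fst z) 0)"

lemma std_rhs_eq_sta_field: "std_rhs l1 l2 L u t = sta_field (l1 * sqrt L) (l2 * L) (u t)"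
  by (simp add: std_rhs_def sta_field_def fun_eq_iff)

lemma sta_field_limit_below_in_filippov_set: "(x2, b) \<in> filippov_set (sta_field a b w) (w, x2)"
proof -
  have "(\<lambda>z. (a * sqrt (w - fst z) + snd z, b)) (w, x2) \<in> filippov_set (sta_field a b w) (w, x2)"
  proof (rule continuous_limit_in_filippov_set[where H = "{z. fst z < w}"])
    have "(w - e/2, x2) \<in> {z. fst z < w} \<and> dist (w - e/2, x2) (w, x2) < e" if "e > 0" for e
      using that by (simp add: dist_Pair_Pair dist_real_def)
    then show "(w, x2) \<in> closure {z. fst z < w}"
      unfolding closure_approachable by blast
    show "isCont (\<lambda>z. (a * sqrt (w - fst z) + snd z, b)) (w, x2)"
      by (intro continuous_intros)
    show "open {z :: real \<times> real. fst z < w}"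
      by (intro open_Collect_less continuous_intros)
    show "sta_field a b w z = (a * sqrt (w - fst z) + snd z, b)" if "z \<in> {z. fst z < w}" for z
      using that by (simp add: sta_field_def sgnpow_pos)
  qed
  then show ?thesis by simp
qed

lemma sta_field_above_in_filippov_set:
  assumes "w \<le> x1"
  shows "(x2 - a * sqrt (x1 - w), - b) \<in> filippov_set (sta_field a b w) (x1, x2)"
proof -
  have "(\<lambda>z. (snd z - a * sqrt (fst z - w), - b)) (x1, x2) \<in> filippov_set (sta_field a b w) (x1, x2)"
  proof (rule continuous_limit_in_filippov_set[where H = "{z. w < fst z}"])
    have "(x1 + e/2, x2) \<in> {z. w < fst z} \<and> dist (x1 + e/2, x2) (x1, x2) < e" if "e > 0" for e
      using that assms by (simp add: dist_Pair_Pair dist_real_def)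
    then show "(x1, x2) \<in> closure {z. w < fst z}"
      unfolding closure_approachable by blast
    show "isCont (\<lambda>z. (snd z - a * sqrt (fst z - w), - b)) (x1, x2)"
      by (intro continuous_intros)
    show "open {z :: real \<times> real. w < fst z}"
      by (intro open_Collect_less continuous_intros)
    show "sta_field a b w z = (snd z - a * sqrt (fst z - w), - b)" if "z \<in> {z. w < fst z}" for z
      using that by (simp add: sta_field_def sgnpow_neg)
  qed
  then show ?thesis by simp
qed

lemma sta_field_sliding_in_filippov_set:
  assumes "\<bar>s\<bar> \<le> 1"
  shows "(x2, b * s) \<in> filippov_set (sta_field a b w) (w, x2)"
proof -
  have "((1 + s)/2) *\<^sub>R (x2, b) + ((1 - s)/2) *\<^sub>R (x2, - b) \<in> filippov_set (sta_field a b w) (w, x2)"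
    using sta_field_limit_below_in_filippov_set sta_field_above_in_filippov_set[of w w] assms
    by (intro convexD[OF convex_filippov_set]) (auto simp: field_simps)
  moreover have "((1 + s)/2) *\<^sub>R (x2, b) + ((1 - s)/2) *\<^sub>R (x2, - b) = (x2, b * s)"
    by (simp add: field_simps)
  ultimately show ?thesis by simp
qed

section \<open>Ramp functions\<close>

definition ramp :: "real \<Rightarrow> real" where "ramp x = max x 0"
definition ramp_integral :: "real \<Rightarrow> real" where "ramp_integral x = (max x 0)^2 / 2"
definition heaviside :: "real \<Rightarrow> real" where "heaviside x = (if 0 < x then 1 else 0)"

lemma ramp_of_nonneg: "0 \<le> x \<Longrightarrow> ramp x = x"
  and ramp_of_nonpos: "x \<le> 0 \<Longrightarrow> ramp x = 0"
  and ramp_integral_of_nonneg: "0 \<le> x \<Longrightarrow> ramp_integral x = x^2 / 2"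
  and ramp_integral_of_nonpos: "x \<le> 0 \<Longrightarrow> ramp_integral x = 0"
  and heaviside_of_pos: "0 < x \<Longrightarrow> heaviside x = 1"
  and heaviside_of_nonpos: "x \<le> 0 \<Longrightarrow> heaviside x = 0"
  by (simp_all add: ramp_def ramp_integral_def heaviside_def)

lemma continuous_on_ramp [continuous_intros]:
  "continuous_on S f \<Longrightarrow> continuous_on S (\<lambda>x. ramp (f x))"
  unfolding ramp_def by (intro continuous_intros)

lemma continuous_on_ramp_integral [continuous_intros]:
  "continuous_on S f \<Longrightarrow> continuous_on S (\<lambda>x. ramp_integral (f x))"
  unfolding ramp_integral_def by (intro continuous_intros) auto

lemma borel_measurable_ramp [measurable]: "ramp \<in> borel_measurable borel"
  unfolding ramp_def by measurable

lemma borel_measurable_ramp_integral [measurable]: "ramp_integral \<in> borel_measurable borel"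
  unfolding ramp_integral_def by measurable

lemma borel_measurable_heaviside [measurable]: "heaviside \<in> borel_measurable borel"
  unfolding heaviside_def by measurable

lemma lipschitz_on_ramp [lipschitz_intros]: "1-lipschitz_on U (\<lambda>x. ramp (x - a))"
  by (rule lipschitz_onI) (auto simp: ramp_def dist_real_def)

lemma has_real_derivative_ramp:
  assumes "x \<noteq> a"
  shows "((\<lambda>t. ramp (t - a)) has_real_derivative heaviside (x - a)) (at x)"
proof (cases "x < a")
  case True
  have "((\<lambda>t. 0) has_real_derivative heaviside (x - a)) (at x)"
    using True by (simp add: heaviside_def)
  then show ?thesis
    by (rule has_field_derivative_transform_within_open[where S = "{..<a}"])
       (use True in \<open>auto simp: ramp_def\<close>)
next
  case False
  then have "a < x" using assms by simp
  have "((\<lambda>t. t - a) has_real_derivative heaviside (x - a)) (at x)"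
    using \<open>a < x\<close> by (auto intro!: derivative_eq_intros simp: heaviside_def)
  then show ?thesis
    by (rule has_field_derivative_transform_within_open[where S = "{a<..}"])
       (use \<open>a < x\<close> in \<open>auto simp: ramp_def\<close>)
qed

lemma has_real_derivative_ramp_integral:
  "((\<lambda>t. ramp_integral (t - a)) has_real_derivative ramp (x - a)) (at x)"
proof (cases "x = a")
  case True
  have "(ramp_integral (t - a) - ramp_integral (x - a)) / (t - x) = ramp (t - a) / 2"
    if "t \<noteq> x" for t
    using True that by (auto simp: ramp_integral_def ramp_def max_def power2_eq_square field_simps)
  then have "\<forall>\<^sub>F t in at x. ramp (t - a) / 2 = (ramp_integral (t - a) - ramp_integral (x - a)) / (t - x)"
    by (auto simp: eventually_at_filter)
  moreover have "((\<lambda>t. ramp (t - a) / 2) \<longlongrightarrow> ramp (x - a)) (at x)"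
    using True unfolding ramp_def by (auto intro!: tendsto_eq_intros)
  ultimately have "((\<lambda>t. (ramp_integral (t - a) - ramp_integral (x - a)) / (t - x)) \<longlongrightarrow> ramp (x - a)) (at x)"
    by (rule Lim_transform_eventually[rotated])
  then show ?thesis
    by (simp add: has_field_derivative_iff)
next
  case False
  show ?thesis
  proof (cases "x < a")
    case True
    have "((\<lambda>t. 0) has_real_derivative ramp (x - a)) (at x)"
      using True by (simp add: ramp_def)
    then show ?thesis
      by (rule has_field_derivative_transform_within_open[where S = "{..<a}"])
         (use True in \<open>auto simp: ramp_integral_def\<close>)
  next
    case False
    then have "a < x" using \<open>x \<noteq> a\<close> by simp
    have "((\<lambda>t. (t - a)^2 / 2) has_real_derivative ramp (x - a)) (at x)"
      using \<open>a < x\<close> by (auto intro!: derivative_eq_intros simp: ramp_def)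
    then show ?thesis
      by (rule has_field_derivative_transform_within_open[where S = "{a<..}"])
         (use \<open>a < x\<close> in \<open>auto simp: ramp_integral_def\<close>)
  qed
qed

section \<open>Choice of the escape parameters\<close>

lemma quadratic_le_vertex:
  fixes A b s :: real
  assumes "A > 0"
  shows "b * s - A * s^2 / 2 \<le> b^2 / (2 * A)"
proof -
  have "0 \<le> (A * s - b)^2 / (2 * A)" using assms by simp
  also have "\<dots> = b^2 / (2 * A) - (b * s - A * s^2 / 2)"
    using assms by (simp add: power2_eq_square field_simps)
  finally show ?thesis by simp
qed

lemma quadratic_nonneg:
  fixes A b s :: real
  assumes "0 \<le> s" "A * s \<le> 2 * b"
  shows "0 \<le> b * s - A * s^2 / 2"
proof -
  have "0 \<le> s * (b - A * s / 2)" using assms by simp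
  then show ?thesis by (simp add: power2_eq_square algebra_simps)
qed

lemma quadratic_mono_before_vertex:
  fixes A b s x :: real
  assumes "0 \<le> A" "s \<le> x" "A * x \<le> b"
  shows "b * s - A * s^2 / 2 \<le> b * x - A * x^2 / 2"
proof -
  have "(b * x - A * x^2 / 2) - (b * s - A * s^2 / 2) = (x - s) * (b - A * (x + s) / 2)"
    by (simp add: power2_eq_square field_simps)
  moreover have "A * (x + s) / 2 \<le> A * x"
    using assms(1,2) mult_left_mono[of s x A] by (simp add: algebra_simps)
  then have "0 \<le> (x - s) * (b - A * (x + s) / 2)"
    using assms(2,3) by simp
  ultimately show ?thesis
    by linarith
qed

lemma quadratic_ge_endpoint:
  fixes A b s x :: real
  assumes "0 \<le> A" "0 \<le> s" "s \<le> x"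
  shows "min 0 (b * x - A * x^2 / 2) \<le> b * s - A * s^2 / 2"
proof (cases "s = 0")
  case False
  then have "x > 0" using assms by simp
  define v where "v = b * x - A * x^2 / 2"
  have "b * s - A * s^2 / 2 = (s / x) * v + A * s * (x - s) / 2"
    using \<open>x > 0\<close> unfolding v_def by (simp add: power2_eq_square field_simps)
  moreover have "0 \<le> A * s * (x - s) / 2"
    using assms by simp
  moreover have "min 0 v \<le> (s / x) * v"
    using mult_right_mono_neg[of "s / x" 1 v] assms \<open>x > 0\<close> by (cases "v \<ge> 0") (auto simp: min_def)
  ultimately show ?thesis
    unfolding v_def by linarith
qed simp

text \<open>
  The noise of the construction after the peak time t1, with sigma measured from t1 and rho
  from t2: during the escape, back on the sliding surface until t2, and in the final phase
  of length d3 in which f'' = -L again.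
\<close>
definition noise_admissible :: "real \<Rightarrow> real \<Rightarrow> real \<Rightarrow> real \<Rightarrow> real \<Rightarrow> real \<Rightarrow> real \<Rightarrow> bool" where
  "noise_admissible A h N k q0 xe d3 \<longleftrightarrow> 0 < q0 \<and> 0 < xe \<and> 0 \<le> d3 \<and> xe \<le> h + d3 \<and>
    (\<forall>\<sigma>\<in>{0..xe}. \<bar>N + (A * h - k * q0) * \<sigma> - A * \<sigma>^2 / 2 - q0^2\<bar> \<le> N) \<and>
    (\<forall>\<sigma>\<in>{xe..h + d3}. \<bar>N + A * h * \<sigma> - A * \<sigma>^2 / 2 - k * q0 * xe\<bar> \<le> N) \<and>
    (\<forall>\<rho>\<in>{0..d3}. \<bar>N + A * h * (h + d3) - A * (h + d3)^2 / 2 - k * q0 * xe - A * d3 * \<rho> + A * \<rho>^2 / 2\<bar> \<le> N)"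

lemma escape_excess_le:
  fixes A b q s :: real
  assumes "A > 0" "b^2 \<le> 2 * A * q^2"
  shows "b * s - A * s^2 / 2 \<le> q^2"
proof -
  have "b * s - A * s^2 / 2 \<le> b^2 / (2 * A)"
    using assms(1) by (rule quadratic_le_vertex)
  also have "\<dots> \<le> q^2"
    using assms by (simp add: pos_divide_le_eq algebra_simps)
  finally show ?thesis .
qed

lemma noise_admissible_full_escape:
  fixes A h N k q0 c d3 :: real
  assumes "A > 0" "4 * N = A * h^2" "q0 > 0" "c = k * q0" "0 < c" "c \<le> A * h / 2"
    and "q0^2 \<le> 2 * N" "(A * h - c)^2 \<le> 2 * A * q0^2" "d3 = (A * h - 2 * c) / A"
  shows "noise_admissible A h N k q0 (h + d3) d3"
proof -
  have "0 \<le> d3" "d3 \<le> h" "A * (h + d3) = 2 * (A * h - c)"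
    using assms(1,5,6) unfolding assms(9) by (auto simp: field_simps)
  then have "0 < h + d3"
    using assms(1,5,6) zero_less_mult_iff[of A "h + d3"] by simp
  have "0 \<le> A * h^2"
    using assms(1) by simp
  then have "0 \<le> N"
    using assms(2) by linarith
  have "A * h * (h + d3) - A * (h + d3)^2 / 2 - c * (h + d3) = (h + d3) * ((A * h - c) - A * (h + d3) / 2)"
    by (simp add: power2_eq_square algebra_simps)
  then have escape_end: "A * h * (h + d3) - A * (h + d3)^2 / 2 - k * q0 * (h + d3) = 0"
    using \<open>A * (h + d3) = 2 * (A * h - c)\<close> assms(4) by simp
  have "\<bar>N + (A * h - k * q0) * \<sigma> - A * \<sigma>^2 / 2 - q0^2\<bar> \<le> N" if "\<sigma> \<in> {0..h + d3}" for \<sigma>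
  proof -
    have "0 \<le> (A * h - c) * \<sigma> - A * \<sigma>^2 / 2"
      using that \<open>A * (h + d3) = 2 * (A * h - c)\<close> \<open>A > 0\<close>
      by (intro quadratic_nonneg) (auto intro: order.trans[OF mult_left_mono])
    moreover have "(A * h - c) * \<sigma> - A * \<sigma>^2 / 2 \<le> q0^2"
      using assms(1,8) by (rule escape_excess_le)
    ultimately show ?thesis
      using assms(4,7) by (simp add: abs_le_iff)
  qed
  moreover have "\<bar>N + A * h * (h + d3) - A * (h + d3)^2 / 2 - k * q0 * (h + d3) - A * d3 * \<rho> + A * \<rho>^2 / 2\<bar> \<le> N"
    if "\<rho> \<in> {0..d3}" for \<rho>
  proof -
    have "0 \<le> A * d3 * \<rho> - A * \<rho>^2 / 2"
      using that \<open>A > 0\<close> by (intro quadratic_nonneg) auto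
    moreover have "A * d3 * \<rho> - A * \<rho>^2 / 2 \<le> (A * d3)^2 / (2 * A)"
      using \<open>A > 0\<close> by (rule quadratic_le_vertex)
    moreover have "(A * d3)^2 / (2 * A) \<le> A * h^2 / 2"
      using \<open>A > 0\<close> \<open>0 \<le> d3\<close> \<open>d3 \<le> h\<close> by (simp add: power2_eq_square mult_mono)
    ultimately show ?thesis
      using escape_end assms(2) by (simp add: abs_le_iff algebra_simps)
  qed
  ultimately show ?thesis
    using assms(3) \<open>0 \<le> d3\<close> \<open>0 < h + d3\<close> escape_end \<open>0 \<le> N\<close>
    unfolding noise_admissible_def by auto
qed

lemma noise_admissible_weak_gain:
  fixes A h N k :: real
  assumes "A > 0" "h > 0" "k > 0" "4 * N = A * h^2" "k^2 \<le> 2 * A"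
  shows "\<exists>q0 xe d3. noise_admissible A h N k q0 xe d3"
proof -
  define q0 where "q0 = min (sqrt (2 * N)) (A * h / (2 * k))"
  define c where "c = k * q0"
  have "0 < A * h^2" using assms by simp
  then have "N > 0" using assms(4) by linarith
  then have "q0 > 0" "c > 0"
    using assms unfolding q0_def c_def by simp_all
  have "q0 \<le> sqrt (2 * N)"
    unfolding q0_def by simp
  then have "q0^2 \<le> sqrt (2 * N) ^ 2"
    using \<open>q0 > 0\<close> by (intro power_mono) auto
  then have "q0^2 \<le> 2 * N"
    using \<open>N > 0\<close> by simp
  have "c \<le> k * (A * h / (2 * k))"
    using assms unfolding c_def q0_def by (intro mult_left_mono) auto
  then have "c \<le> A * h / 2"
    using assms by simp
  have "(A * h - c)^2 \<le> 2 * A * q0^2"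
  proof (cases "sqrt (2 * N) \<le> A * h / (2 * k)")
    case True
    then have "2 * A * q0^2 = (A * h)^2"
      using \<open>N > 0\<close> assms(4) unfolding q0_def by (simp add: power2_eq_square)
    then show ?thesis
      using \<open>c > 0\<close> \<open>c \<le> A * h / 2\<close> by (simp add: power_mono)
  next
    case False
    then have "q0 = A * h / (2 * k)" unfolding q0_def by simp
    then have "A * h - c = A * h / 2" "2 * A * q0^2 = (A * h / 2)^2 * (2 * A / k^2)"
      using assms unfolding c_def by (simp_all add: power_divide power_mult_distrib)
    moreover have "(A * h / 2)^2 * 1 \<le> (A * h / 2)^2 * (2 * A / k^2)"
      using assms by (intro mult_left_mono) auto
    ultimately show ?thesis by simp
  qed
  then have "noise_admissible A h N k q0 (h + (A * h - 2 * c) / A) ((A * h - 2 * c) / A)"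
    using assms(1,4) \<open>q0 > 0\<close> \<open>c > 0\<close> \<open>c \<le> A * h / 2\<close> \<open>q0^2 \<le> 2 * N\<close>
    by (intro noise_admissible_full_escape[where c = c]) (simp_all add: c_def)
  then show ?thesis by blast
qed

lemma noise_admissible_short_escape:
  fixes A h N k q0 c xe :: real
  assumes "A > 0" "h > 0" "4 * N = A * h^2" "q0 > 0" "c = k * q0" "h/2 \<le> xe" "xe \<le> h"
    and "c * xe = 2 * N" "q0^2 \<le> N/2" "(A * h - c)^2 \<le> 2 * A * q0^2"
  shows "noise_admissible A h N k q0 xe 0"
proof -
  have "0 < A * h^2" using assms by simp
  then have "N > 0" using assms(3) by linarith
  have "3 * N / 2 = A * h * (h/2) - A * (h/2)^2 / 2"
    using assms(3) by (simp add: power2_eq_square algebra_simps)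
  also have "\<dots> \<le> A * h * xe - A * xe^2 / 2"
    using assms(1,6,7) by (intro quadratic_mono_before_vertex) auto
  finally have "3 * N / 2 \<le> A * h * xe - A * xe^2 / 2" .
  have "\<bar>N + (A * h - k * q0) * \<sigma> - A * \<sigma>^2 / 2 - q0^2\<bar> \<le> N" if "\<sigma> \<in> {0..xe}" for \<sigma>
  proof -
    have "min 0 ((A * h - c) * xe - A * xe^2 / 2) \<le> (A * h - c) * \<sigma> - A * \<sigma>^2 / 2"
      using that \<open>A > 0\<close> by (intro quadratic_ge_endpoint) auto
    moreover have "(A * h - c) * xe - A * xe^2 / 2 = (A * h * xe - A * xe^2 / 2) - 2 * N"
      using assms(8) by (simp add: algebra_simps)
    moreover have "(A * h - c) * \<sigma> - A * \<sigma>^2 / 2 \<le> q0^2"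
      using assms(1,10) by (rule escape_excess_le)
    ultimately show ?thesis
      using assms(5,9) \<open>3 * N / 2 \<le> A * h * xe - A * xe^2 / 2\<close> \<open>N > 0\<close>
      by (simp add: abs_le_iff min_def split: if_splits)
  qed
  moreover have "\<bar>N + A * h * \<sigma> - A * \<sigma>^2 / 2 - k * q0 * xe\<bar> \<le> N" if "\<sigma> \<in> {xe..h + 0}" for \<sigma>
  proof -
    have "0 \<le> A * h * \<sigma> - A * \<sigma>^2 / 2"
      using that \<open>A > 0\<close> assms(6) by (intro quadratic_nonneg) auto
    moreover have "A * h * \<sigma> - A * \<sigma>^2 / 2 \<le> (A * h)^2 / (2 * A)"
      using \<open>A > 0\<close> by (rule quadratic_le_vertex)
    moreover have "(A * h)^2 / (2 * A) = 2 * N"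
      using assms(1,3) by (simp add: power2_eq_square algebra_simps)
    ultimately show ?thesis
      using assms(5,8) by (simp add: abs_le_iff)
  qed
  moreover have "\<bar>N + A * h * (h + 0) - A * (h + 0)^2 / 2 - k * q0 * xe - A * 0 * \<rho> + A * \<rho>^2 / 2\<bar> \<le> N"
    if "\<rho> \<in> {0..0}" for \<rho>
    using that assms(3,5,8) \<open>N > 0\<close> by (simp add: power2_eq_square)
  ultimately show ?thesis
    using assms(2,4,6,7) unfolding noise_admissible_def by auto
qed

lemma noise_admissible_strong_gain:
  fixes A h N k :: real
  assumes "A > 0" "h > 0" "k > 0" "4 * N = A * h^2" "2 * A \<le> k^2"
  shows "\<exists>q0 xe d3. noise_admissible A h N k q0 xe d3"
proof -
  define g where "g = k^2 / (k^2 + 2 * A)"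
  define c where "c = g * A * h"
  define q0 where "q0 = c / k"
  define xe where "xe = h / (2 * g)"
  have "k^2 + 2 * A > 0" using assms by (simp add: add_pos_pos)
  then have "1/2 \<le> g" "g \<le> 1" "2 * A * g = (1 - g) * k^2"
    using assms unfolding g_def by (simp_all add: field_simps)
  have "q0 > 0" "c = k * q0"
    using assms \<open>1/2 \<le> g\<close> unfolding q0_def c_def by simp_all
  have "q0^2 = 2 * g * (1 - g) * N"
  proof -
    have "q0^2 * k^2 = c^2"
      using \<open>c = k * q0\<close> by (simp add: power2_eq_square)
    also have "\<dots> = g^2 * A * (A * h^2)"
      unfolding c_def by (simp add: power2_eq_square)
    also have "\<dots> = 2 * g * N * (2 * A * g)"
      using assms(4) by (simp add: power2_eq_square algebra_simps)
    also have "\<dots> = (2 * g * (1 - g) * N) * k^2"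
      unfolding \<open>2 * A * g = (1 - g) * k^2\<close> by (simp add: algebra_simps)
    finally show ?thesis using assms(3) by simp
  qed
  have "0 < A * h^2" using assms by simp
  then have "N > 0" using assms(4) by linarith
  have "g * (1 - g) \<le> 1/4"
    using zero_le_power2[of "g - 1/2"] by (simp add: power2_eq_square algebra_simps)
  then have "q0^2 \<le> N/2"
    using \<open>q0^2 = 2 * g * (1 - g) * N\<close> \<open>N > 0\<close> by (simp add: mult_right_mono[of _ _ N, simplified])
  have "h/2 \<le> xe" "xe \<le> h" "c * xe = 2 * N"
    using assms \<open>1/2 \<le> g\<close> \<open>g \<le> 1\<close> unfolding xe_def c_def
    by (simp_all add: field_simps power2_eq_square)
  have "(A * h - c)^2 = (1 - g) * (1 - g) * (A * (A * h^2))"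
    unfolding c_def by (simp add: power2_eq_square algebra_simps)
  also have "\<dots> \<le> g * (1 - g) * (A * (A * h^2))"
    using \<open>1/2 \<le> g\<close> \<open>g \<le> 1\<close> \<open>A > 0\<close> \<open>0 < A * h^2\<close> by (intro mult_right_mono) auto
  also have "\<dots> = 2 * A * q0^2"
    unfolding assms(4)[symmetric] \<open>q0^2 = 2 * g * (1 - g) * N\<close> by (simp add: algebra_simps)
  finally have "noise_admissible A h N k q0 xe 0"
    using assms(1,2,4) \<open>q0 > 0\<close> \<open>c = k * q0\<close> \<open>h/2 \<le> xe\<close> \<open>xe \<le> h\<close> \<open>c * xe = 2 * N\<close> \<open>q0^2 \<le> N/2\<close>
    by (intro noise_admissible_short_escape)
  then show ?thesis by blast
qed

lemma noise_admissible_exists: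
  fixes A h N k :: real
  assumes "A > 0" "h > 0" "k > 0" "4 * N = A * h^2"
  shows "\<exists>q0 xe d3. noise_admissible A h N k q0 xe d3"
  using noise_admissible_weak_gain[OF assms] noise_admissible_strong_gain[OF assms]
  by (cases "k^2 \<le> 2 * A") auto

section \<open>The worst-case input and trajectory\<close>

locale sta_worst_case =
  fixes L N l1 l2 \<tau> h q0 xe d3 :: real
  assumes L_pos: "0 < L" and l2_pos: "0 < l2" and tau_nonneg: "0 \<le> \<tau>" and h_pos: "0 < h"
    and noise_level: "4 * N = (l2 + 1) * L * h^2"
    and admissible: "noise_admissible ((l2 + 1) * L) h N (l1 * sqrt L) q0 xe d3"
begin

definition A :: real where "A = (l2 + 1) * L"
definition k :: real where "k = l1 * sqrt L"

definition t1 :: real where "t1 = \<tau> + h"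
definition te :: real where "te = t1 + xe"
definition t2 :: real where "t2 = t1 + h + d3"
definition t3 :: real where "t3 = t2 + d3"

definition signal :: "real \<Rightarrow> real" where
  "signal t = - L * (ramp_integral (t - \<tau>) - 2 * ramp_integral (t - t1)
                     + 2 * ramp_integral (t - t2) - ramp_integral (t - t3))"
definition signal_deriv :: "real \<Rightarrow> real" where
  "signal_deriv t = - L * (ramp (t - \<tau>) - 2 * ramp (t - t1) + 2 * ramp (t - t2) - ramp (t - t3))"
definition accel_sign :: "real \<Rightarrow> real" where
  "accel_sign t = heaviside (t - \<tau>) - 2 * heaviside (t - t1) + 2 * heaviside (t - t2) - heaviside (t - t3)"

definition escape :: "real \<Rightarrow> real" where
  "escape t = heaviside (t - t1) - heaviside (t - te)"
definition escape_drift :: "real \<Rightarrow> real" where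
  "escape_drift t = k * q0 * (ramp (t - t1) - ramp (t - te))"

definition noise :: "real \<Rightarrow> real" where
  "noise t = - N - (l2 + 1) * signal t - escape_drift t - q0^2 * escape t"
definition traj :: "real \<Rightarrow> real \<times> real" where
  "traj t = (- N - l2 * signal t - escape_drift t, - l2 * signal_deriv t)"
definition traj_deriv :: "real \<Rightarrow> real \<times> real" where
  "traj_deriv t = (- l2 * signal_deriv t - k * q0 * escape t, l2 * L * accel_sign t)"

lemma A_pos: "0 < A"
  using L_pos l2_pos unfolding A_def by simp

lemma admissible_params:
  "0 < q0" "0 < xe" "0 \<le> d3" "xe \<le> h + d3" "noise_admissible A h N k q0 xe d3"
  using admissible unfolding A_def k_def noise_admissible_def by auto

lemma times_ordered: "\<tau> < t1" "t1 < te" "te \<le> t2" "t2 \<le> t3"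
  using h_pos admissible_params unfolding t1_def te_def t2_def t3_def by auto

lemma abs_accel_sign_le: "\<bar>accel_sign t\<bar> \<le> 1"
  using times_ordered unfolding accel_sign_def heaviside_def by auto

lemma escape_cases: "escape t = 0 \<or> (escape t = 1 \<and> accel_sign t = -1)"
  using times_ordered unfolding escape_def accel_sign_def heaviside_def by auto

lemma has_real_derivative_signal: "(signal has_real_derivative signal_deriv t) (at t)"
  unfolding signal_def[abs_def] signal_deriv_def
  by (intro DERIV_cmult DERIV_diff DERIV_add has_real_derivative_ramp_integral)

lemma has_real_derivative_signal_deriv:
  assumes "t \<notin> {\<tau>, t1, t2, t3}"
  shows "(signal_deriv has_real_derivative - L * accel_sign t) (at t)"
  unfolding signal_deriv_def[abs_def] accel_sign_def
  using assms by (intro DERIV_cmult DERIV_diff DERIV_add has_real_derivative_ramp) auto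

lemma has_real_derivative_escape_drift:
  assumes "t \<notin> {t1, te}"
  shows "(escape_drift has_real_derivative k * q0 * escape t) (at t)"
  unfolding escape_drift_def[abs_def] escape_def
  using assms by (intro DERIV_cmult DERIV_diff has_real_derivative_ramp) auto

lemma lipschitz_signal_deriv: "(6 * L)-lipschitz_on U signal_deriv"
proof -
  have "(L * (1 + 2 * 1 + 2 * 1 + 1))-lipschitz_on U signal_deriv"
    unfolding signal_deriv_def using L_pos
    by (intro lipschitz_intros) auto
  then show ?thesis by (simp add: mult.commute)
qed

lemma in_FL_signal: "in_FL L signal signal_deriv"
  unfolding in_FL_def
proof (intro conjI allI impI exI[of _ "6 * L"])
  show "(signal has_real_derivative signal_deriv t) (at t within {0..})" for t
    using has_real_derivative_signal by (rule has_field_derivative_at_within)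
  show "(6 * L)-lipschitz_on {0..} signal_deriv"
    by (rule lipschitz_signal_deriv)
  have "negligible {\<tau>, t1, t2, t3}"
    by simp
  then have "{\<tau>, t1, t2, t3} \<in> null_sets lebesgue"
    by (simp only: negligible_iff_null_sets)
  from AE_not_in[OF this] show "AE t in lebesgue. t \<ge> 0 \<longrightarrow>
      (\<exists>f''. (signal_deriv has_real_derivative f'') (at t within {0..}) \<and> \<bar>f''\<bar> \<le> L)"
  proof (rule AE_mp, intro AE_I2 impI)
    fix t assume "t \<notin> {\<tau>, t1, t2, t3}"
    then have "(signal_deriv has_real_derivative - L * accel_sign t) (at t within {0..})"
      by (rule has_field_derivative_at_within[OF has_real_derivative_signal_deriv])
    moreover have "\<bar>- L * accel_sign t\<bar> \<le> L"
      using abs_accel_sign_le[of t] L_pos by (simp add: abs_mult mult_left_le)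
    ultimately show "\<exists>f''. (signal_deriv has_real_derivative f'') (at t within {0..}) \<and> \<bar>f''\<bar> \<le> L"
      by blast
  qed
qed

lemma initial_values: "signal 0 = 0" "signal_deriv 0 = 0" "escape_drift 0 = 0" "escape 0 = 0"
  using times_ordered tau_nonneg
  unfolding signal_def signal_deriv_def escape_drift_def escape_def
    ramp_integral_def ramp_def heaviside_def
  by auto

lemma noise_eq:
  "noise t = - N + A * (ramp_integral (t - \<tau>) - 2 * ramp_integral (t - t1)
                        + 2 * ramp_integral (t - t2) - ramp_integral (t - t3))
             - k * q0 * (ramp (t - t1) - ramp (t - te)) - q0^2 * escape t"
  unfolding noise_def signal_def escape_drift_def A_def by (simp add: algebra_simps)

lemma A_mult_h_squared: "A * h^2 = 4 * N"
  using noise_level unfolding A_def by simp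

lemma ramp_terms_past_peak:
  "- N + A * ((t - \<tau>)^2 / 2 - (t - t1)^2) = N + A * h * (t - t1) - A * (t - t1)^2 / 2"
proof -
  have "N = A * h^2 / 4" and "t - \<tau> = h + (t - t1)"
    using A_mult_h_squared unfolding t1_def by simp_all
  then show ?thesis
    by (simp add: power2_eq_square field_simps)
qed

lemma abs_noise_le_before_peak:
  assumes "t \<le> t1"
  shows "\<bar>noise t\<bar> \<le> N"
proof -
  have "noise t = - N + A * ramp_integral (t - \<tau>)"
    using assms times_ordered unfolding noise_eq escape_def
    by (simp add: ramp_integral_of_nonpos ramp_of_nonpos heaviside_of_nonpos)
  moreover have "ramp_integral (t - \<tau>) \<le> h^2 / 2"
    using assms h_pos unfolding ramp_integral_def t1_def by (auto intro: power_mono)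
  moreover have "0 \<le> ramp_integral (t - \<tau>)"
    unfolding ramp_integral_def by simp
  ultimately show ?thesis
    using A_pos A_mult_h_squared mult_left_mono[of "ramp_integral (t - \<tau>)" "h^2 / 2" A]
    by (simp add: abs_le_iff)
qed

lemma noise_during_escape:
  assumes "t1 < t" "t \<le> te"
  shows "noise t = N + (A * h - k * q0) * (t - t1) - A * (t - t1)^2 / 2 - q0^2"
proof -
  have "noise t = - N + A * ((t - \<tau>)^2 / 2 - (t - t1)^2) - k * q0 * (t - t1) - q0^2"
    using assms times_ordered unfolding noise_eq escape_def
    by (simp add: ramp_integral_of_nonpos ramp_of_nonpos heaviside_of_nonpos
        ramp_integral_of_nonneg ramp_of_nonneg heaviside_of_pos)
  also have "\<dots> = N + (A * h - k * q0) * (t - t1) - A * (t - t1)^2 / 2 - q0^2"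
    using ramp_terms_past_peak by (simp add: algebra_simps)
  finally show ?thesis .
qed

lemma noise_after_escape:
  assumes "te < t" "t \<le> t2"
  shows "noise t = N + A * h * (t - t1) - A * (t - t1)^2 / 2 - k * q0 * xe"
proof -
  have "noise t = - N + A * ((t - \<tau>)^2 / 2 - (t - t1)^2) - k * q0 * xe"
    using assms times_ordered unfolding noise_eq escape_def
    by (simp add: ramp_integral_of_nonpos ramp_of_nonpos heaviside_of_nonpos
        ramp_integral_of_nonneg ramp_of_nonneg heaviside_of_pos te_def)
  also have "\<dots> = N + A * h * (t - t1) - A * (t - t1)^2 / 2 - k * q0 * xe"
    using ramp_terms_past_peak by simp
  finally show ?thesis .
qed

lemma noise_after_return:
  assumes "t2 < t"
  shows "noise t = N + A * h * (h + d3) - A * (h + d3)^2 / 2 - k * q0 * xe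
                   - A * d3 * min (t - t2) d3 + A * (min (t - t2) d3)^2 / 2"
proof -
  have "t - t1 = (h + d3) + (t - t2)"
    unfolding t2_def by simp
  have "noise t = - N + A * ((t - \<tau>)^2 / 2 - (t - t1)^2)
                  + A * ((t - t2)^2 - 2 * ramp_integral (t - t3) / 2) - k * q0 * xe"
    using assms times_ordered unfolding noise_eq escape_def
    by (simp add: ramp_integral_of_nonneg ramp_of_nonneg heaviside_of_pos te_def algebra_simps)
  also have "\<dots> = N + A * h * (t - t1) - A * (t - t1)^2 / 2
                  + A * ((t - t2)^2 - 2 * ramp_integral (t - t3) / 2) - k * q0 * xe"
    using ramp_terms_past_peak by simp
  also have "\<dots> = N + A * h * (h + d3) - A * (h + d3)^2 / 2 - k * q0 * xe
                   - A * d3 * min (t - t2) d3 + A * (min (t - t2) d3)^2 / 2"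
  proof (cases "t \<le> t3")
    case True
    then show ?thesis
      unfolding \<open>t - t1 = (h + d3) + (t - t2)\<close> using assms
      by (simp add: ramp_integral_of_nonpos t3_def power2_eq_square field_simps)
  next
    case False
    then have "t - t3 = (t - t2) - d3"
      unfolding t3_def by simp
    then show ?thesis
      unfolding \<open>t - t1 = (h + d3) + (t - t2)\<close> using False
      by (simp add: ramp_integral_of_nonneg t3_def power2_eq_square field_simps)
  qed
  finally show ?thesis .
qed

lemma abs_noise_le: "\<bar>noise t\<bar> \<le> N"
proof -
  note admissible = admissible_params(5)[unfolded noise_admissible_def]
  consider "t \<le> t1" | "t1 < t" "t \<le> te" | "te < t" "t \<le> t2" | "t2 < t"
    by linarith
  then show ?thesis
  proof cases
    case 1
    then show ?thesis by (rule abs_noise_le_before_peak)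
  next
    case 2
    then show ?thesis
      using admissible unfolding noise_during_escape[OF 2] te_def by auto
  next
    case 3
    then show ?thesis
      using admissible unfolding noise_after_escape[OF 3] te_def t2_def by auto
  next
    case 4
    then show ?thesis
      using admissible admissible_params(3) unfolding noise_after_return[OF 4] by auto
  qed
qed

lemma in_EN_noise: "in_EN N noise"
  unfolding in_EN_def
proof (intro conjI allI impI)
  have "noise \<in> borel_measurable borel"
    unfolding noise_def[abs_def] signal_def escape_drift_def escape_def by measurable
  then show "noise \<in> borel_measurable (lebesgue_on {0..})"
    using measurable_compose[OF id_borel_measurable_lebesgue_on] by simp
qed (rule abs_noise_le)

lemma input_eq_traj: "signal t + noise t = fst (traj t) - q0^2 * escape t"
  unfolding noise_def traj_def by (simp add: algebra_simps)

lemma traj_deriv_in_filippov_set: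
  "traj_deriv t \<in> filippov_set (std_rhs l1 l2 L (\<lambda>t. signal t + noise t) t) (traj t)"
proof -
  have rhs: "std_rhs l1 l2 L (\<lambda>t. signal t + noise t) t
      = sta_field k (l2 * L) (fst (traj t) - q0^2 * escape t)"
    unfolding std_rhs_eq_sta_field input_eq_traj k_def ..
  have traj: "traj t = (fst (traj t), - l2 * signal_deriv t)"
    unfolding traj_def by simp
  from escape_cases[of t] show ?thesis
  proof
    assume "escape t = 0"
    then show ?thesis
      unfolding rhs traj_deriv_def using abs_accel_sign_le[of t]
      by (subst traj) (simp add: sta_field_sliding_in_filippov_set)
  next
    assume "escape t = 1 \<and> accel_sign t = -1"
    moreover have "sqrt (fst (traj t) - (fst (traj t) - q0^2)) = q0"
      using admissible_params(1) by simp
    ultimately show ?thesis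
      unfolding rhs traj_deriv_def
      using sta_field_above_in_filippov_set[of "fst (traj t) - q0^2" "fst (traj t)"
          "- l2 * signal_deriv t" k "l2 * L"]
      by (subst traj) simp
  qed
qed

lemma has_vector_derivative_traj:
  assumes "t \<notin> {\<tau>, t1, te, t2, t3}"
  shows "(traj has_vector_derivative traj_deriv t) (at t)"
proof -
  have "((\<lambda>t. - N - l2 * signal t - escape_drift t) has_real_derivative
      0 - l2 * signal_deriv t - k * q0 * escape t) (at t)"
    using assms
    by (intro DERIV_diff DERIV_const DERIV_cmult has_real_derivative_signal
        has_real_derivative_escape_drift) auto
  moreover have "t \<notin> {\<tau>, t1, t2, t3}"
    using assms by simp
  from DERIV_cmult[OF has_real_derivative_signal_deriv[OF this], of "- l2"]
  have "((\<lambda>t. - l2 * signal_deriv t) has_real_derivative l2 * L * accel_sign t) (at t)"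
    by (simp add: mult.assoc)
  ultimately show ?thesis
    unfolding traj_def[abs_def] traj_deriv_def has_real_derivative_iff_has_vector_derivative
    using has_vector_derivative_Pair by fastforce
qed

lemma filippov_solution_traj:
  "filippov_solution (std_rhs l1 l2 L (\<lambda>t. signal t + noise t)) traj"
  unfolding filippov_solution_def
proof (intro exI conjI allI impI)
  show "AE t in lebesgue. t \<ge> 0 \<longrightarrow> traj_deriv t \<in> filippov_set (std_rhs l1 l2 L (\<lambda>t. signal t + noise t) t) (traj t)"
    using traj_deriv_in_filippov_set by simp
  fix T :: real assume "0 \<le> T"
  have "continuous_on {0..T} traj"
    unfolding traj_def[abs_def] signal_def signal_deriv_def escape_drift_def
    by (intro continuous_intros)
  then show integral: "(traj_deriv has_integral (traj T - traj 0)) {0..T}"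
    using \<open>0 \<le> T\<close> has_vector_derivative_traj
    by (intro fundamental_theorem_of_calculus_interior_strong[where S = "{\<tau>, t1, te, t2, t3}"]) auto
  define bound where "bound x = l2 * \<bar>signal_deriv x\<bar> + \<bar>k * q0\<bar> + l2 * L" for x
  show "traj_deriv absolutely_integrable_on {0..T}"
  proof (rule absolutely_integrable_integrable_bound)
    show "traj_deriv integrable_on {0..T}"
      using integral by blast
    have "continuous_on {0..T} bound"
      unfolding bound_def[abs_def] signal_deriv_def[abs_def] by (intro continuous_intros)
    then show "bound integrable_on {0..T}"
      by (rule integrable_continuous_interval)
    fix x
    have "\<bar>escape x\<bar> \<le> 1"
      using escape_cases[of x] by auto
    then have "\<bar>k * q0 * escape x\<bar> \<le> \<bar>k * q0\<bar>"
      by (simp add: abs_mult mult_left_le)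
    moreover have "\<bar>l2 * L * accel_sign x\<bar> \<le> l2 * L"
      using abs_accel_sign_le[of x] l2_pos L_pos by (simp add: abs_mult mult_left_le)
    moreover have "\<bar>- l2 * signal_deriv x - k * q0 * escape x\<bar> \<le> l2 * \<bar>signal_deriv x\<bar> + \<bar>k * q0 * escape x\<bar>"
      using abs_triangle_ineq4[of "- l2 * signal_deriv x" "k * q0 * escape x"] l2_pos
      by (simp add: abs_mult)
    moreover have "norm (traj_deriv x) \<le> \<bar>- l2 * signal_deriv x - k * q0 * escape x\<bar> + \<bar>l2 * L * accel_sign x\<bar>"
      unfolding traj_deriv_def using norm_Pair_le by (metis real_norm_def)
    ultimately show "norm (traj_deriv x) \<le> bound x"
      unfolding bound_def by linarith
  qed
qed

lemma traj_initial: "traj 0 = (signal 0 + noise 0, 0)"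
  unfolding traj_def noise_def by (simp add: initial_values)

lemma estimation_error_at_peak: "\<bar>snd (traj t1) - signal_deriv t1\<bar> = (l2 + 1) * L * h"
proof -
  have "signal_deriv t1 = - L * h"
    using times_ordered unfolding signal_deriv_def
    by (simp add: ramp_of_nonneg ramp_of_nonpos t1_def)
  then show ?thesis
    using L_pos l2_pos h_pos unfolding traj_def by (simp add: algebra_simps)
qed

end

theorem proposition1:
  fixes L N l1 l2 \<tau> :: real
  assumes "L > 0" "N > 0" "l1 > 0" "l2 > 0" "\<tau> \<ge> 0"
  shows "\<exists>f f' \<eta> (y :: real \<Rightarrow> real \<times> real).
           in_FL L f f' \<and> in_EN N \<eta> \<and> f 0 = 0 \<and> f' 0 = 0 \<and>
           filippov_solution (std_rhs l1 l2 L (\<lambda>t. f t + \<eta> t)) y \<and>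
           y 0 = (f 0 + \<eta> 0, 0) \<and>
           (SUP t\<in>{\<tau>..}. ereal \<bar>snd (y t) - f' t\<bar>) \<ge> ereal (2 * sqrt (l2 + 1) * sqrt (N * L))"
proof -
  define a where "a = (l2 + 1) * L"
  define h where "h = 2 * sqrt (N / a)"
  have "a > 0" "h > 0" "l1 * sqrt L > 0"
    using assms unfolding a_def h_def by simp_all
  have "4 * N = a * h^2"
    using \<open>a > 0\<close> assms unfolding h_def by (simp add: power_mult_distrib)
  have "a * h = 2 * (sqrt a * sqrt a) * (sqrt N / sqrt a)"
    using \<open>a > 0\<close> unfolding h_def by (simp add: real_sqrt_divide)
  also have "\<dots> = 2 * sqrt (l2 + 1) * sqrt (N * L)"
    using \<open>a > 0\<close> assms unfolding a_def by (simp add: real_sqrt_mult)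
  finally have peak: "a * h = 2 * sqrt (l2 + 1) * sqrt (N * L)" .
  obtain q0 xe d3 where "noise_admissible a h N (l1 * sqrt L) q0 xe d3"
    using noise_admissible_exists \<open>a > 0\<close> \<open>h > 0\<close> \<open>l1 * sqrt L > 0\<close> \<open>4 * N = a * h^2\<close> by blast
  then interpret sta_worst_case L N l1 l2 \<tau> h q0 xe d3
    using assms \<open>h > 0\<close> \<open>4 * N = a * h^2\<close> unfolding a_def by unfold_locales auto
  have "ereal (a * h) \<le> (SUP t\<in>{\<tau>..}. ereal \<bar>snd (traj t) - signal_deriv t\<bar>)"
    using estimation_error_at_peak times_ordered unfolding a_def by (intro SUP_upper2[of t1]) auto
  then show ?thesis
    unfolding peak
    using in_FL_signal in_EN_noise initial_values filippov_solution_traj traj_initial by blast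
qed

end
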